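(* Let $\mathcal{A}_1$ and $\mathcal{A}_2$ be deterministic timed automata over the same alphabet and the same clock set. If $\mathscr{L}_r(\mathcal{A}_1)=\mathscr{L}_r(\mathcal{A}_2)$, then $\mathcal{L}(\mathcal{A}_1)=\mathcal{L}(\mathcal{A}_2)$.
   Context: Let $\Sigma$ be a finite alphabet and $\mathcal{C}=\{c_1,\dots,c_m\}$ a finite set of clocks. A clock constraint is a finite conjunction of atomic constraints $c\sim k$ ($c\in\mathcal{C}$, $k\in\mathbb{N}$, ${\sim}\in\{<,\le,=,\ge,>\}$). A timed automaton is $\mathcal{A}=(\Sigma,L,l_0,F,\mathcal{C},\Delta)$ with finite location set $L$, initial $l_0$, accepting $F\subseteq L$, transitions $\Delta\subseteq L\times\Sigma\times\Phi(\mathcal{C})\times2^{\mathcal{C}}\times L$. A run over a delay-timed word $\omega=(\sigma_1,t_1)\cdots(\sigma_n,t_n)\in(\Sigma\times\mathbb{R}_{\ge0})^*$ is $(l_0,\nu_0)\xrightarrow{t_1,\sigma_1}\cdots\xrightarrow{t_n,\sigma_n}(l_n,\nu_n)$ with $\nu_0\equiv0$ and transitions $(l_{i-1},\sigma_i,\phi_i,\mathcal{B}_i,l_i)\in\Delta$ such that $\nu_{i-1}+t_i$ satisfies $\phi_i$ and $\nu_i$ is $\nu_{i-1}+t_i$ with the clocks of $\mathcal{B}_i$ set to $0$; it is accepting if $l_n\in F$. The timed language $\mathcal{L}(\mathcal{A})$ is the set of delay-timed words having an accepting run. $\mathcal{A}$ is a deterministic timed automaton if every delay-timed word has at most one run.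 The reset-clocked word of such a run is $(\sigma_1,\mathbf{v}_1,\mathbf{b}_1)\cdots(\sigma_n,\mathbf{v}_n,\mathbf{b}_n)$ with $\mathbf{v}_i=\nu_{i-1}+t_i\in\mathbb{R}_{\ge0}^m$ and $\mathbf{b}_{i}\in\{\top,\bot\}^m$, $\mathbf{b}_{i,j}=\top$ iff $c_j\in\mathcal{B}_i$; the reset-clocked language $\mathscr{L}_r(\mathcal{A})$ is the set of reset-clocked words of accepting runs of $\mathcal{A}$. *)

theory Defs
  imports Complex_Main
begin

text \<open>Clocks are c_0, ..., c_(m-1), represented by the natural numbers below m.
 A clock valuation is a function nat => real (only values below m matter).\<close>

datatype cmp = Lt | Le | Eq | Ge | Gt

text \<open>Atomic constraint c ~ k with c a clock index and k a natural number.\<close>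
type_synonym atom = "nat \<times> cmp \<times> nat"
type_synonym constr = "atom list"

fun cmp_sat :: "cmp \<Rightarrow> real \<Rightarrow> real \<Rightarrow> bool" where
  "cmp_sat Lt x k = (x < k)"
| "cmp_sat Le x k = (x \<le> k)"
| "cmp_sat Eq x k = (x = k)"
| "cmp_sat Ge x k = (x \<ge> k)"
| "cmp_sat Gt x k = (x > k)"

definition sat :: "(nat \<Rightarrow> real) \<Rightarrow> constr \<Rightarrow> bool" where
  "sat \<nu> \<phi> = (\<forall>(c, op, k) \<in> set \<phi>. cmp_sat op (\<nu> c) (real k))"

text \<open>Timed automaton (Sigma, L, l0, F, C, Delta) with C = {c_0..c_(m-1)}.
  Transitions (l, sigma, phi, B, l').\<close>
record ('s, 'l) ta =
  alph :: "'s set"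
  locs :: "'l set"
  init :: 'l
  acc :: "'l set"
  nclk :: nat
  trans :: "('l \<times> 's \<times> constr \<times> nat set \<times> 'l) set"

definition well_formed :: "('s, 'l) ta \<Rightarrow> bool" where
  "well_formed A \<longleftrightarrow> finite (alph A) \<and> finite (locs A) \<and> init A \<in> locs A \<and>
     acc A \<subseteq> locs A \<and> finite (trans A) \<and>
     (\<forall>(l, s, \<phi>, B, l') \<in> trans A. l \<in> locs A \<and> s \<in> alph A \<and> l' \<in> locs A \<and>
        (\<forall>(c, _, _) \<in> set \<phi>. c < nclk A) \<and> B \<subseteq> {..<nclk A})"

definition reset :: "(nat \<Rightarrow> real) \<Rightarrow> nat set \<Rightarrow> nat \<Rightarrow> real" where
  "reset \<nu> B = (\<lambda>c. if c \<in> B then 0 else \<nu> c)"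

type_synonym 's dword = "('s \<times> real) list"

text \<open>We represent a run by the list of transitions taken; locations and valuations are
  determined by it.\<close>

fun run_from :: "('s, 'l) ta \<Rightarrow> 'l \<Rightarrow> (nat \<Rightarrow> real) \<Rightarrow> 's dword
     \<Rightarrow> ('l \<times> 's \<times> constr \<times> nat set \<times> 'l) list \<Rightarrow> 'l \<Rightarrow> bool" where
  "run_from A l \<nu> [] [] l' = (l' = l)"
| "run_from A l \<nu> ((s, t) # w) ((l1, s1, \<phi>, B, l2) # ts) l' =
     (t \<ge> 0 \<and> (l1, s1, \<phi>, B, l2) \<in> trans A \<and> l1 = l \<and> s1 = s \<and>
      sat (\<lambda>c. \<nu> c + t) \<phi> \<and> run_from A l2 (reset (\<lambda>c. \<nu> c + t) B) w ts l')"
| "run_from A l \<nu> _ _ l' = False"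

definition is_run :: "('s, 'l) ta \<Rightarrow> 's dword \<Rightarrow> ('l \<times> 's \<times> constr \<times> nat set \<times> 'l) list \<Rightarrow> bool" where
  "is_run A w ts \<longleftrightarrow> (\<exists>l'. run_from A (init A) (\<lambda>_. 0) w ts l')"

definition accepting_run :: "('s, 'l) ta \<Rightarrow> 's dword \<Rightarrow> ('l \<times> 's \<times> constr \<times> nat set \<times> 'l) list \<Rightarrow> bool" where
  "accepting_run A w ts \<longleftrightarrow> (\<exists>l'. run_from A (init A) (\<lambda>_. 0) w ts l' \<and> l' \<in> acc A)"

definition timed_lang :: "('s, 'l) ta \<Rightarrow> 's dword set" where
  "timed_lang A = {w. (\<forall>(s, t) \<in> set w. s \<in> alph A \<and> t \<ge> 0) \<and> (\<exists>ts. accepting_run A w ts)}"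

definition deterministic :: "('s, 'l) ta \<Rightarrow> bool" where
  "deterministic A \<longleftrightarrow> (\<forall>w ts ts'. is_run A w ts \<and> is_run A w ts' \<longrightarrow> ts = ts')"

text \<open>Reset-clocked letters (s, v, b) with v in R^m and b in {T,F}^m as lists of length m.\<close>
type_synonym 's rcword = "('s \<times> real list \<times> bool list) list"

fun rc_of :: "nat \<Rightarrow> (nat \<Rightarrow> real) \<Rightarrow> 's dword \<Rightarrow> ('l \<times> 's \<times> constr \<times> nat set \<times> 'l) list \<Rightarrow> 's rcword" where
  "rc_of m \<nu> ((s, t) # w) ((l1, s1, \<phi>, B, l2) # ts) =
     (s, map (\<lambda>c. \<nu> c + t) [0..<m], map (\<lambda>c. c \<in> B) [0..<m])
       # rc_of m (reset (\<lambda>c. \<nu> c + t) B) w ts"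
| "rc_of m \<nu> _ _ = []"

definition reset_clocked_lang :: "('s, 'l) ta \<Rightarrow> 's rcword set" where
  "reset_clocked_lang A = {rc_of (nclk A) (\<lambda>_. 0) w ts | w ts. accepting_run A w ts}"

end

theory Submission
  imports Defs
begin

text \<open>Guards inspect nothing else, so if an accepting
  run of \<open>A\<^sub>2\<close> over some word has the same reset-clocked word as an accepting run of \<open>A\<^sub>1\<close>
  over \<open>w\<close>, the transitions of the former can be replayed over \<open>w\<close> itself. With no clocks the delays are not recorded at all, but then
  every guard is trivially true.\<close>

definition guards_below :: "('s, 'l) ta \<Rightarrow> nat \<Rightarrow> bool" where
  "guards_below A m \<longleftrightarrow> (\<forall>(l, s, \<phi>, B, l') \<in> trans A. \<forall>(c, _, _) \<in> set \<phi>. c < m)"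

lemma guards_belowD:
  "guards_below A m \<Longrightarrow> (l, s, \<phi>, B, l') \<in> trans A \<Longrightarrow> \<forall>(c, _, _) \<in> set \<phi>. c < m"
  unfolding guards_below_def by fast

lemma well_formed_guards_below: "well_formed A \<Longrightarrow> guards_below A (nclk A)"
  unfolding well_formed_def guards_below_def by fastforce

lemma run_from_length: "run_from A l \<nu> w ts l' \<Longrightarrow> length ts = length w"
  by (induction A l \<nu> w ts l' rule: run_from.induct) auto

lemma sat_cong:
  assumes "\<forall>(c, _, _) \<in> set \<phi>. c < m" and "\<forall>c<m. \<nu> c = \<mu> c"
  shows "sat \<nu> \<phi> = sat \<mu> \<phi>"
  using assms unfolding sat_def by fastforce

lemma rc_of_cong: "\<forall>c<m. \<nu> c = \<mu> c \<Longrightarrow> rc_of m \<nu> w ts = rc_of m \<mu> w ts"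
proof (induction m \<nu> w ts arbitrary: \<mu> rule: rc_of.induct)
  case (1 m \<nu> s t w l1 s1 \<phi> B l2 ts)
  then have "\<forall>c<m. reset (\<lambda>c. \<nu> c + t) B c = reset (\<lambda>c. \<mu> c + t) B c"
    by (simp add: reset_def)
  with 1 show ?case by simp
qed auto

text \<open>The recorded reset sets agree below \<open>m\<close>, so the tail on the left may be read
  with the resets \<open>B\<close> of the transition being replayed.\<close>

lemma rc_of_Cons_eqD:
  assumes "rc_of m \<nu> ((s, t) # w) ((k1, u1, \<psi>, C, k2) # ts) =
           rc_of m \<nu>' ((s', t') # w') ((l1, s1, \<phi>, B, l2) # ts')"
  shows "s = s'" and "\<forall>c<m. \<nu> c + t = \<nu>' c + t'"
    and "rc_of m (reset (\<lambda>c. \<nu> c + t) B) w ts = rc_of m (reset (\<lambda>c. \<nu>' c + t') B) w' ts'"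
proof -
  have clock_values: "map (\<lambda>c. \<nu> c + t) [0..<m] = map (\<lambda>c. \<nu>' c + t') [0..<m]"
    and resets: "map (\<lambda>c. c \<in> C) [0..<m] = map (\<lambda>c. c \<in> B) [0..<m]"
    and tails: "rc_of m (reset (\<lambda>c. \<nu> c + t) C) w ts = rc_of m (reset (\<lambda>c. \<nu>' c + t') B) w' ts'"
    using assms by auto
  show "s = s'" using assms by simp
  show "\<forall>c<m. \<nu> c + t = \<nu>' c + t'" using clock_values by (simp add: map_eq_conv)
  have "\<forall>c<m. reset (\<lambda>c. \<nu> c + t) B c = reset (\<lambda>c. \<nu> c + t) C c"
    using resets by (simp add: map_eq_conv reset_def)
  from rc_of_cong[OF this, where w = w and ts = ts] tails
  show "rc_of m (reset (\<lambda>c. \<nu> c + t) B) w ts = rc_of m (reset (\<lambda>c. \<nu>' c + t') B) w' ts'"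
    by simp
qed

lemma run_from_replay:
  "guards_below A m \<Longrightarrow> run_from A l \<nu>' w' ts' l' \<Longrightarrow> rc_of m \<nu> w ts = rc_of m \<nu>' w' ts' \<Longrightarrow>
    length ts = length w \<Longrightarrow> \<forall>(_, t) \<in> set w. t \<ge> 0 \<Longrightarrow> \<forall>c<m. \<nu> c = \<nu>' c \<Longrightarrow>
    run_from A l \<nu> w ts' l'"
proof (induction A l \<nu>' w' ts' l' arbitrary: \<nu> w ts rule: run_from.induct)
  case (1 A l \<nu>' l')
  then show ?case by (cases w; cases ts) auto
next
  case (2 A l \<nu>' s' t' w' l1 s1 \<phi> B l2 ts' l')
  obtain s t w0 where w: "w = (s, t) # w0"
    using "2.prems"(3,4) by (cases w; cases ts) auto
  obtain k1 u1 \<psi> C k2 ts0 where ts: "ts = (k1, u1, \<psi>, C, k2) # ts0"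
    using "2.prems"(4) w by (cases ts) auto
  note rc = "2.prems"(3)[unfolded w ts]
  have step: "(l1, s1, \<phi>, B, l2) \<in> trans A" "l1 = l" "s1 = s'" "sat (\<lambda>c. \<nu>' c + t') \<phi>"
    and tail: "run_from A l2 (reset (\<lambda>c. \<nu>' c + t') B) w' ts' l'"
    using "2.prems"(2) by auto
  have firing_values: "\<forall>c<m. \<nu> c + t = \<nu>' c + t'"
    using rc_of_Cons_eqD(2)[OF rc] "2.prems"(6) by simp
  have "sat (\<lambda>c. \<nu> c + t) \<phi>"
    using sat_cong[OF guards_belowD[OF "2.prems"(1) step(1)] firing_values] step(4) by simp
  moreover have "run_from A l2 (reset (\<lambda>c. \<nu> c + t) B) w0 ts' l'"
  proof (rule "2.IH"[OF "2.prems"(1) tail rc_of_Cons_eqD(3)[OF rc]])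
    show "length ts0 = length w0" "\<forall>(_, t) \<in> set w0. t \<ge> 0"
      using "2.prems"(4,5) w ts by auto
    show "\<forall>c<m. reset (\<lambda>c. \<nu> c + t) B c = reset (\<lambda>c. \<nu>' c + t') B c"
      using firing_values by (simp add: reset_def)
  qed
  moreover have "t \<ge> 0" using "2.prems"(5) w by simp
  ultimately show ?case
    using step rc_of_Cons_eqD(1)[OF rc] w by simp
qed simp_all

lemma timed_lang_subset_of_reset_clocked_lang_subset:
  assumes "well_formed A2" and "alph A1 = alph A2" and "nclk A1 = nclk A2"
    and "reset_clocked_lang A1 \<subseteq> reset_clocked_lang A2"
  shows "timed_lang A1 \<subseteq> timed_lang A2"
proof
  fix w assume "w \<in> timed_lang A1"
  then obtain ts l where letters: "\<forall>(s, t) \<in> set w. s \<in> alph A1 \<and> t \<ge> 0"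
    and run1: "run_from A1 (init A1) (\<lambda>_. 0) w ts l" "l \<in> acc A1"
    unfolding timed_lang_def accepting_run_def by auto
  then have "rc_of (nclk A1) (\<lambda>_. 0) w ts \<in> reset_clocked_lang A2"
    using assms(4) unfolding reset_clocked_lang_def accepting_run_def by blast
  then obtain w' ts' l' where rc: "rc_of (nclk A2) (\<lambda>_. 0) w ts = rc_of (nclk A2) (\<lambda>_. 0) w' ts'"
    and run2: "run_from A2 (init A2) (\<lambda>_. 0) w' ts' l'" "l' \<in> acc A2"
    using assms(3) unfolding reset_clocked_lang_def accepting_run_def by auto
  have "run_from A2 (init A2) (\<lambda>_. 0) w ts' l'"
    using run_from_replay[OF well_formed_guards_below[OF assms(1)] run2(1) rc]
      run_from_length[OF run1(1)] letters by auto
  then show "w \<in> timed_lang A2"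
    using run2(2) letters assms(2) unfolding timed_lang_def accepting_run_def by auto
qed

theorem theorem4p1:
  fixes A1 :: "('s, 'l1) ta" and A2 :: "('s, 'l2) ta"
  assumes "well_formed A1" and "well_formed A2"
    and "alph A1 = alph A2" and "nclk A1 = nclk A2"
    and "deterministic A1" and "deterministic A2"
    and "reset_clocked_lang A1 = reset_clocked_lang A2"
  shows "timed_lang A1 = timed_lang A2"
proof
  show "timed_lang A1 \<subseteq> timed_lang A2"
    using timed_lang_subset_of_reset_clocked_lang_subset[OF assms(2,3,4)] assms(7) by simp
  show "timed_lang A2 \<subseteq> timed_lang A1"
    using timed_lang_subset_of_reset_clocked_lang_subset[OF assms(1) assms(3,4)[symmetric]] assms(7) by simp
qed

end
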